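(* Let $G=(V,E)$ be a connected undirected graph (finite or infinite). Then $G$ has a partition $F_G\neq\{V\}$ of $V$ into maximal ``strong'' partitive sets if and only if $G$ has a multiplex $M_G$ with $\widetilde{M_G}=V$.
   Context: A graph $G=(V,E)$ has vertex set $V$ and edge set $E\subseteq V^2$; it is undirected if $E$ is irreflexive and symmetric. A set $X\subseteq V$ is a partitive set of $G$ if for all $a,b\in X$ and $c\in V\setminus X$: $(a,c)\in E\Leftrightarrow(b,c)\in E$ and $(c,a)\in E\Leftrightarrow(c,b)\in E$; $I(G)$ is the class of partitive sets. A ``strong'' partitive set is an $X\in I(G)$ such that for every $Y\in I(G)$ with $X\cap Y\neq\emptyset$, $X\subseteq Y$ or $Y\subseteq X$; $I_F(G)$ is their class. A maximal ``strong'' partitive set is an element of $I_F(G)\setminus\{V\}$ maximal for inclusion in $I_F(G)\setminus\{V\}$. Implication classes: on $E$ define $(a,b)\Gamma(a',b')$ iff either $a=a'$ and $(b,b')\notin E$, or $b=b'$ and $(a,a')\notin E$; the classes of the transitive closure $\Gamma^*$ are the implication classes. For an implication class $A$, $A^{-1}=\{(b,a):(a,b)\in A\}$ and the color class is $\widehat A=A\cup A^{-1}$. A simplex of rank $r\ge1$ is a complete sub-graph $S=(V_S,E_S)$ of $G$ on $r+1$ vertices whose distinct undirected edges lie in distinct color classes. A multiplex is a set $M(S)=\bigcup\{\widehat A:\widehat A\text{ a color class},\ \widehat A\cap E_S\neq\emptyset\}$ for a simplex $S$; $\widetilde M$ is the set of vertices spanned by $M$. *)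

theory Defs
  imports Main "HOL-Library.Disjoint_Sets"
begin

definition graph :: "'a set \<Rightarrow> ('a \<times> 'a) set \<Rightarrow> bool" where
  "graph V E \<longleftrightarrow> E \<subseteq> V \<times> V"

definition undirected_graph :: "'a set \<Rightarrow> ('a \<times> 'a) set \<Rightarrow> bool" where
  "undirected_graph V E \<longleftrightarrow> graph V E \<and> irrefl E \<and> sym E"

definition connected_graph :: "'a set \<Rightarrow> ('a \<times> 'a) set \<Rightarrow> bool" where
  "connected_graph V E \<longleftrightarrow> V \<noteq> {} \<and> (\<forall>a\<in>V. \<forall>b\<in>V. (a, b) \<in> (E \<inter> V \<times> V)\<^sup>*)"

definition partitive :: "'a set \<Rightarrow> ('a \<times> 'a) set \<Rightarrow> 'a set \<Rightarrow> bool" where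
  "partitive V E X \<longleftrightarrow> X \<subseteq> V \<and>
     (\<forall>a\<in>X. \<forall>b\<in>X. \<forall>c\<in>V - X.
        ((a, c) \<in> E \<longleftrightarrow> (b, c) \<in> E) \<and> ((c, a) \<in> E \<longleftrightarrow> (c, b) \<in> E))"

definition strong_partitive :: "'a set \<Rightarrow> ('a \<times> 'a) set \<Rightarrow> 'a set \<Rightarrow> bool" where
  "strong_partitive V E X \<longleftrightarrow> partitive V E X \<and>
     (\<forall>Y. partitive V E Y \<longrightarrow> X \<inter> Y \<noteq> {} \<longrightarrow> X \<subseteq> Y \<or> Y \<subseteq> X)"

definition maximal_strong_partitive :: "'a set \<Rightarrow> ('a \<times> 'a) set \<Rightarrow> 'a set \<Rightarrow> bool" where
  "maximal_strong_partitive V E X \<longleftrightarrow> strong_partitive V E X \<and> X \<noteq> V \<and>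
     (\<forall>Y. strong_partitive V E Y \<longrightarrow> Y \<noteq> V \<longrightarrow> X \<subseteq> Y \<longrightarrow> Y = X)"

definition Gamma :: "('a \<times> 'a) set \<Rightarrow> (('a \<times> 'a) \<times> ('a \<times> 'a)) set" where
  "Gamma E = {((a, b), (a', b')). (a, b) \<in> E \<and> (a', b') \<in> E \<and>
     ((a = a' \<and> (b, b') \<notin> E) \<or> (b = b' \<and> (a, a') \<notin> E))}"

definition implication_class :: "('a \<times> 'a) set \<Rightarrow> ('a \<times> 'a) set \<Rightarrow> bool" where
  "implication_class E A \<longleftrightarrow> (\<exists>e\<in>E. A = (Gamma E)\<^sup>+ `` {e})"

definition color_class :: "('a \<times> 'a) set \<Rightarrow> ('a \<times> 'a) set \<Rightarrow> bool" where
  "color_class E C \<longleftrightarrow> (\<exists>A. implication_class E A \<and> C = A \<union> A\<inverse>)"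

text \<open>A simplex of rank r \<ge> 1 (r + 1 = number of vertices, possibly infinite):
  a complete subgraph on the vertex set S with at least two vertices whose
  distinct undirected edges lie in distinct color classes.\<close>
definition simplex :: "'a set \<Rightarrow> ('a \<times> 'a) set \<Rightarrow> 'a set \<Rightarrow> bool" where
  "simplex V E S \<longleftrightarrow> S \<subseteq> V \<and> (\<exists>a\<in>S. \<exists>b\<in>S. a \<noteq> b) \<and>
     (\<forall>a\<in>S. \<forall>b\<in>S. a \<noteq> b \<longrightarrow> (a, b) \<in> E) \<and>
     (\<forall>C. color_class E C \<longrightarrow>
        (\<forall>a b c d. (a, b) \<in> C \<inter> (S \<times> S) \<longrightarrow> (c, d) \<in> C \<inter> (S \<times> S) \<longrightarrow>
            {a, b} = {c, d}))"

definition multiplex_of :: "'a set \<Rightarrow> ('a \<times> 'a) set \<Rightarrow> 'a set \<Rightarrow> ('a \<times> 'a) set" where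
  "multiplex_of V E S = \<Union>{C. color_class E C \<and> C \<inter> (E \<inter> S \<times> S) \<noteq> {}}"

definition multiplex :: "'a set \<Rightarrow> ('a \<times> 'a) set \<Rightarrow> ('a \<times> 'a) set \<Rightarrow> bool" where
  "multiplex V E M \<longleftrightarrow> (\<exists>S. simplex V E S \<and> M = multiplex_of V E S)"

definition spanned :: "('a \<times> 'a) set \<Rightarrow> 'a set" where
  "spanned M = Domain M \<union> Range M"

end

theory Submission
  imports Defs
begin

text \<open>
  Let N be the complement of G. If N is disconnected, its components are the maximal strong
  partitive sets. Vertices of different co-components are adjacent and an implication class never
  moves an endpoint to another co-component, so one representative per co-component spans a
  simplex; its multiplex reaches every vertex along paths of non-edges inside co-components.

  If G and N are both connected, two overlapping proper partitive sets have a proper union. Either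
  the union U v of all proper partitive sets through v is proper for every v: then the U v are the
  maximal strong partitive sets, and the color class of any edge leaving some U v reaches a partitive
  set that must be all of V. Or U v = V for some v: then any two vertices are joined by non-edges
  inside a proper partitive set, which confines every multiplex to a proper partitive set. Nor can
  there be a partition into maximal strong partitive sets, since every proper partitive set through
  v lies in the block X of v: otherwise X is, after enlarging that set to a proper partitive P, the
  co-component (or, dually, the component) of v in P, so P - X is completely adjacent to X, and the
  union of all such P would be a strong proper partitive set strictly above X.
\<close>

lemma rtrancl_exits_set:
  assumes "(a, b) \<in> R\<^sup>*" "a \<in> A" "b \<notin> A"
  shows "\<exists>p q. p \<in> A \<and> q \<notin> A \<and> (p, q) \<in> R \<and> (a, p) \<in> R\<^sup>*"
  using assms by (induction rule: rtrancl_induct) blast+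

lemma partition_on_image:
  assumes "\<And>v. v \<in> V \<Longrightarrow> v \<in> f v" "\<And>v. v \<in> V \<Longrightarrow> f v \<subseteq> V"
    and "\<And>v w. v \<in> V \<Longrightarrow> w \<in> f v \<Longrightarrow> f w = f v"
  shows "partition_on V (f ` V)"
proof (rule partition_onI)
  show "\<Union>(f ` V) = V" using assms(1,2) by blast
  show "{} \<notin> f ` V" using assms(1) by blast
  fix p q assume "p \<in> f ` V" "q \<in> f ` V" "p \<noteq> q"
  then show "disjnt p q" using assms(3) unfolding disjnt_def by blast
qed

lemma partition_on_ne_single_block:
  assumes "partition_on V F" "F \<noteq> {V}" "V \<noteq> {}"
  shows "\<exists>a\<in>V. \<exists>b\<in>V. a \<noteq> b"
proof (rule ccontr)
  assume "\<not> ?thesis"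
  then obtain v where V: "V = {v}" using assms(3) by blast
  have "X = V" if "X \<in> F" for X
  proof -
    have "X \<subseteq> V" "X \<noteq> {}" using that assms(1) unfolding partition_on_def by auto
    then show ?thesis using V by (metis subset_singletonD)
  qed
  moreover have "F \<noteq> {}" using assms(1,3) unfolding partition_on_def by auto
  ultimately show False using assms(2) by blast
qed

definition graph_complement :: "'a set \<Rightarrow> ('a \<times> 'a) set \<Rightarrow> ('a \<times> 'a) set" where
  "graph_complement V E = {(a, b). a \<in> V \<and> b \<in> V \<and> a \<noteq> b \<and> (a, b) \<notin> E}"

lemma partitive_graph_complement [simp]:
  "partitive V (graph_complement V E) X \<longleftrightarrow> partitive V E X"
  unfolding partitive_def graph_complement_def by auto

lemma strong_partitive_graph_complement [simp]:
  "strong_partitive V (graph_complement V E) X \<longleftrightarrow> strong_partitive V E X"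
  unfolding strong_partitive_def by simp

lemma maximal_strong_partitive_graph_complement [simp]:
  "maximal_strong_partitive V (graph_complement V E) X \<longleftrightarrow> maximal_strong_partitive V E X"
  unfolding maximal_strong_partitive_def by simp

lemma graph_complement_graph_complement:
  "undirected_graph V E \<Longrightarrow> graph_complement V (graph_complement V E) = E"
  unfolding graph_complement_def undirected_graph_def graph_def irrefl_def by auto

lemma undirected_graph_complement:
  "undirected_graph V E \<Longrightarrow> undirected_graph V (graph_complement V E)"
  unfolding graph_complement_def undirected_graph_def graph_def irrefl_def sym_def by auto

definition induced_component :: "('a \<times> 'a) set \<Rightarrow> 'a set \<Rightarrow> 'a \<Rightarrow> 'a set" where
  "induced_component R P x = (R \<inter> P \<times> P)\<^sup>* `` {x}"

lemma induced_component_self: "x \<in> induced_component R P x"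
  unfolding induced_component_def by simp

lemma induced_component_subset: "x \<in> P \<Longrightarrow> induced_component R P x \<subseteq> P"
  unfolding induced_component_def by (auto elim: rtranclE)

lemma induced_component_step:
  "u \<in> induced_component R P x \<Longrightarrow> (u, c) \<in> R \<Longrightarrow> u \<in> P \<Longrightarrow> c \<in> P \<Longrightarrow>
    c \<in> induced_component R P x"
  unfolding induced_component_def by (auto intro: rtrancl_into_rtrancl)

lemma induced_component_eq:
  assumes "sym R" "y \<in> induced_component R P x"
  shows "induced_component R P y = induced_component R P x"
proof -
  have "sym ((R \<inter> P \<times> P)\<^sup>*)"
    using assms(1) by (intro sym_rtrancl sym_Int) (auto simp: sym_def)
  moreover have "(x, y) \<in> (R \<inter> P \<times> P)\<^sup>*"
    using assms(2) unfolding induced_component_def by simp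
  ultimately show ?thesis
    unfolding induced_component_def sym_def by (blast intro: rtrancl_trans)
qed

lemma induced_component_rtrancl:
  assumes "y \<in> induced_component R P x"
  shows "(x, y) \<in> (R \<inter> induced_component R P x \<times> induced_component R P x)\<^sup>*"
proof -
  have "(x, y) \<in> (R \<inter> P \<times> P)\<^sup>*" using assms unfolding induced_component_def by simp
  then show ?thesis
  proof (induction rule: rtrancl_induct)
    case (step y z)
    then have "y \<in> induced_component R P x" "z \<in> induced_component R P x"
      unfolding induced_component_def by (auto intro: rtrancl_into_rtrancl)
    with step show ?case by (blast intro: rtrancl_into_rtrancl)
  qed simp
qed

lemma induced_component_invariant:
  assumes "\<And>p q. p \<in> P \<Longrightarrow> q \<in> P \<Longrightarrow> (p, q) \<in> R \<Longrightarrow> f p = f q"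
    and "y \<in> induced_component R P x"
  shows "f y = f x"
proof -
  have "(x, y) \<in> (R \<inter> P \<times> P)\<^sup>*" using assms(2) unfolding induced_component_def by simp
  then show ?thesis by (induction rule: rtrancl_induct) (auto dest: assms(1))
qed

definition color_class_of :: "('a \<times> 'a) set \<Rightarrow> 'a \<times> 'a \<Rightarrow> ('a \<times> 'a) set" where
  "color_class_of E e = (Gamma E)\<^sup>+ `` {e} \<union> ((Gamma E)\<^sup>+ `` {e})\<inverse>"

lemma color_class_iff: "color_class E C \<longleftrightarrow> (\<exists>e\<in>E. C = color_class_of E e)"
  unfolding color_class_def implication_class_def color_class_of_def by blast

lemma color_class_sym: "color_class E C \<Longrightarrow> (p, q) \<in> C \<Longrightarrow> (q, p) \<in> C"
  unfolding color_class_iff color_class_of_def by blast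

lemma simplex_color_class_unique:
  "simplex V E S \<Longrightarrow> color_class E C \<Longrightarrow> (a, b) \<in> C \<Longrightarrow> (c, d) \<in> C \<Longrightarrow>
    a \<in> S \<Longrightarrow> b \<in> S \<Longrightarrow> c \<in> S \<Longrightarrow> d \<in> S \<Longrightarrow> {a, b} = {c, d}"
  unfolding simplex_def by blast

lemma multiplex_two_vertices: "multiplex V E M \<Longrightarrow> \<exists>a\<in>V. \<exists>b\<in>V. a \<noteq> b"
  unfolding multiplex_def simplex_def by blast

definition proper_partitive_union :: "'a set \<Rightarrow> ('a \<times> 'a) set \<Rightarrow> 'a \<Rightarrow> 'a set" where
  "proper_partitive_union V E v = \<Union>{Y. partitive V E Y \<and> Y \<noteq> V \<and> v \<in> Y}"

locale undirected =
  fixes V :: "'a set" and E :: "('a \<times> 'a) set"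
  assumes undirected: "undirected_graph V E"
begin

abbreviation N :: "('a \<times> 'a) set" where
  "N \<equiv> graph_complement V E"

lemma edge_in_V: "(a, b) \<in> E \<Longrightarrow> a \<in> V \<and> b \<in> V"
  using undirected unfolding undirected_graph_def graph_def by auto

lemma edge_sym: "(a, b) \<in> E \<longleftrightarrow> (b, a) \<in> E"
  using undirected unfolding undirected_graph_def sym_def by auto

lemma edge_irrefl: "(a, a) \<notin> E"
  using undirected unfolding undirected_graph_def irrefl_def by auto

lemma complement_iff: "(a, b) \<in> N \<longleftrightarrow> a \<in> V \<and> b \<in> V \<and> a \<noteq> b \<and> (a, b) \<notin> E"
  unfolding graph_complement_def by auto

lemma sym_complement: "sym N"
  unfolding sym_def complement_iff using edge_sym by blast

lemma partitive_subset: "partitive V E X \<Longrightarrow> X \<subseteq> V"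
  unfolding partitive_def by auto

lemma partitive_adj:
  "partitive V E X \<Longrightarrow> a \<in> X \<Longrightarrow> b \<in> X \<Longrightarrow> c \<in> V \<Longrightarrow> c \<notin> X \<Longrightarrow> (a, c) \<in> E \<longleftrightarrow> (b, c) \<in> E"
  unfolding partitive_def by blast

lemma partitiveI:
  assumes "X \<subseteq> V"
    and "\<And>a b c. a \<in> X \<Longrightarrow> b \<in> X \<Longrightarrow> c \<in> V \<Longrightarrow> c \<notin> X \<Longrightarrow> (a, c) \<in> E \<Longrightarrow> (b, c) \<in> E"
  shows "partitive V E X"
  unfolding partitive_def using assms edge_sym by blast

lemma partitive_Union:
  assumes "\<And>Y. Y \<in> \<Y> \<Longrightarrow> partitive V E Y \<and> x \<in> Y"
  shows "partitive V E (\<Union>\<Y>)"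
proof (rule partitiveI)
  show "\<Union>\<Y> \<subseteq> V" using assms partitive_subset by blast
  fix a b c assume H: "a \<in> \<Union>\<Y>" "b \<in> \<Union>\<Y>" "c \<in> V" "c \<notin> \<Union>\<Y>" "(a, c) \<in> E"
  then obtain A B where AB: "A \<in> \<Y>" "B \<in> \<Y>" "a \<in> A" "b \<in> B" by blast
  then have "c \<notin> A" "c \<notin> B" using H(4) by blast+
  then have "(x, c) \<in> E" "(b, c) \<in> E \<longleftrightarrow> (x, c) \<in> E"
    using partitive_adj[of A a x c] partitive_adj[of B b x c] assms AB H(3,5) by blast+
  then show "(b, c) \<in> E" by blast
qed

lemma partitive_Un:
  "partitive V E Y \<Longrightarrow> partitive V E Q \<Longrightarrow> x \<in> Y \<Longrightarrow> x \<in> Q \<Longrightarrow> partitive V E (Y \<union> Q)"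
  using partitive_Union[of "{Y, Q}" x] by auto

lemma partitive_singleton: "v \<in> V \<Longrightarrow> partitive V E {v}"
  unfolding partitive_def by auto

lemma partitive_V: "partitive V E V"
  unfolding partitive_def by auto

lemma partitive_overlap_adj:
  assumes "partitive V E A" "partitive V E B"
    and "p \<in> A" "p \<notin> B" "q \<in> A" "q \<in> B" "r \<in> B" "r \<notin> A"
  shows "((p, q) \<in> E \<longleftrightarrow> (p, r) \<in> E) \<and> ((p, r) \<in> E \<longleftrightarrow> (q, r) \<in> E)"
proof -
  have "p \<in> V" "r \<in> V" using assms partitive_subset by auto
  then have "(q, p) \<in> E \<longleftrightarrow> (r, p) \<in> E" and "(p, r) \<in> E \<longleftrightarrow> (q, r) \<in> E"
    using partitive_adj assms by blast+
  then show ?thesis using edge_sym by blast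
qed

lemma partitive_overlap_uniform_adj:
  assumes Y: "partitive V E Y" and Q: "partitive V E Q"
    and a: "a1 \<in> Y" "a1 \<notin> Q" "a2 \<in> Y" "a2 \<in> Q" "a3 \<in> Q" "a3 \<notin> Y"
    and pq: "p \<in> Y \<union> Q" "q \<in> Y \<union> Q" "(p \<in> Y) \<noteq> (q \<in> Y) \<or> (p \<in> Q) \<noteq> (q \<in> Q)"
  shows "(p, q) \<in> E \<longleftrightarrow> (a1, a2) \<in> E"
proof -
  define \<tau> where "\<tau> \<longleftrightarrow> (a1, a2) \<in> E"
  note overlap = partitive_overlap_adj[OF Y Q]
  have 1: "(p, q) \<in> E \<longleftrightarrow> \<tau>" "(q, p) \<in> E \<longleftrightarrow> \<tau>"
    if "p \<in> Y" "p \<notin> Q" "q \<in> Y" "q \<in> Q" for p q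
  proof -
    show "(p, q) \<in> E \<longleftrightarrow> \<tau>"
      using overlap[OF that a(5,6)] overlap[OF that(1,2) a(3-6)] overlap[OF a(1-6)]
      unfolding \<tau>_def by blast
    then show "(q, p) \<in> E \<longleftrightarrow> \<tau>" using edge_sym by blast
  qed
  have 2: "(p, r) \<in> E \<longleftrightarrow> \<tau>" "(r, p) \<in> E \<longleftrightarrow> \<tau>"
    if "p \<in> Y" "p \<notin> Q" "r \<in> Q" "r \<notin> Y" for p r
    using overlap[OF that(1,2) a(3,4) that(3,4)] 1[OF that(1,2) a(3,4)] edge_sym[of r p] by blast+
  have 3: "(q, r) \<in> E \<longleftrightarrow> \<tau>" "(r, q) \<in> E \<longleftrightarrow> \<tau>"
    if "q \<in> Y" "q \<in> Q" "r \<in> Q" "r \<notin> Y" for q r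
    using overlap[OF a(1,2) that] 1[OF a(1,2) that(1,2)] edge_sym[of r q] by blast+
  from pq have "(p, q) \<in> E \<longleftrightarrow> \<tau>"
    by (cases "p \<in> Y"; cases "p \<in> Q"; cases "q \<in> Y"; cases "q \<in> Q") (auto simp: 1 2 3)
  then show ?thesis unfolding \<tau>_def .
qed

lemma strong_partitiveD:
  "strong_partitive V E X \<Longrightarrow> partitive V E Q \<Longrightarrow> X \<inter> Q \<noteq> {} \<Longrightarrow> X \<subseteq> Q \<or> Q \<subseteq> X"
  unfolding strong_partitive_def by blast

lemma strong_partitive_partitive: "strong_partitive V E X \<Longrightarrow> partitive V E X"
  unfolding strong_partitive_def by blast

lemma maximal_strong_partitiveD:
  assumes "maximal_strong_partitive V E X"
  shows "strong_partitive V E X" "X \<noteq> V" "X \<subseteq> V"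
    and "strong_partitive V E Y \<Longrightarrow> Y \<noteq> V \<Longrightarrow> X \<subseteq> Y \<Longrightarrow> Y = X"
proof -
  show "strong_partitive V E X" "X \<noteq> V"
    and "strong_partitive V E Y \<Longrightarrow> Y \<noteq> V \<Longrightarrow> X \<subseteq> Y \<Longrightarrow> Y = X"
    using assms unfolding maximal_strong_partitive_def by blast+
  then show "X \<subseteq> V" using strong_partitive_partitive partitive_subset by blast
qed

lemma Gamma_iff: "((a, b), (a', b')) \<in> Gamma E \<longleftrightarrow> (a, b) \<in> E \<and> (a', b') \<in> E \<and>
     ((a = a' \<and> (b, b') \<notin> E) \<or> (b = b' \<and> (a, a') \<notin> E))"
  unfolding Gamma_def by auto

lemma Gamma_sym: "(e, f) \<in> Gamma E \<Longrightarrow> (f, e) \<in> Gamma E"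
  by (cases e; cases f) (auto simp: Gamma_iff edge_sym)

lemma Gamma_refl: "e \<in> E \<Longrightarrow> (e, e) \<in> Gamma E"
  by (cases e) (auto simp: Gamma_iff edge_irrefl)

lemma Gamma_rtrancl_into_trancl: "e \<in> E \<Longrightarrow> (e, f) \<in> (Gamma E)\<^sup>* \<Longrightarrow> (e, f) \<in> (Gamma E)\<^sup>+"
  by (metis Gamma_refl r_into_trancl' rtranclD)

lemma color_class_of_refl: "e \<in> E \<Longrightarrow> e \<in> color_class_of E e"
  unfolding color_class_of_def using Gamma_refl by blast

lemma color_class_color_class_of: "e \<in> E \<Longrightarrow> color_class E (color_class_of E e)"
  unfolding color_class_iff by blast

lemma color_class_subset_E: "color_class E C \<Longrightarrow> C \<subseteq> E"
proof -
  have "(e, f) \<in> (Gamma E)\<^sup>+ \<Longrightarrow> f \<in> E" for e f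
    by (induction rule: trancl_induct) (auto simp: Gamma_def)
  then show "color_class E C \<Longrightarrow> C \<subseteq> E"
    unfolding color_class_iff color_class_of_def using edge_sym by fastforce
qed

lemma color_class_extend:
  assumes C: "color_class E C" and "(p, q) \<in> C" "(p, c) \<in> E" "(q, c) \<notin> E"
  shows "(p, c) \<in> C"
proof -
  obtain e where e: "C = color_class_of E e" using C color_class_iff by blast
  have "(p, q) \<in> E" using color_class_subset_E C assms(2) by blast
  then have "((p, q), (p, c)) \<in> Gamma E" "((q, p), (c, p)) \<in> Gamma E"
    using assms(3,4) by (auto simp: Gamma_iff edge_sym)
  then show ?thesis
    using assms(2) unfolding e color_class_of_def by (blast intro: trancl_into_trancl)
qed

lemma color_class_edge_adj:
  assumes "color_class E C" "(p, q) \<in> C" "(p, c) \<notin> C" "(q, c) \<notin> C"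
  shows "(p, c) \<in> E \<longleftrightarrow> (q, c) \<in> E"
  using color_class_extend[OF assms(1,2)] color_class_extend[OF assms(1) color_class_sym[OF assms(1,2)]]
    assms(3,4) by blast

lemma Gamma_partitive_closed:
  assumes Z: "partitive V E Z" and G: "((a, b), (a', b')) \<in> Gamma E" and ab: "a \<in> Z" "b \<in> Z"
  shows "a' \<in> Z \<and> b' \<in> Z"
proof -
  have E': "(a', b') \<in> E" using G by (simp add: Gamma_iff)
  then have "a' \<in> V" "b' \<in> V" using edge_in_V by auto
  from G consider "a = a'" "(b, b') \<notin> E" | "b = b'" "(a, a') \<notin> E"
    by (auto simp: Gamma_iff)
  then show ?thesis
  proof cases
    case 1
    then show ?thesis using partitive_adj[OF Z ab \<open>b' \<in> V\<close>] E' ab by auto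
  next
    case 2
    then show ?thesis using partitive_adj[OF Z ab(2,1) \<open>a' \<in> V\<close>] E' ab edge_sym[of a a'] edge_sym[of b a']
      by auto
  qed
qed

lemma color_class_subset_partitive:
  assumes Z: "partitive V E Z" and C: "color_class E C" and "(x, y) \<in> C" "x \<in> Z" "y \<in> Z"
  shows "C \<subseteq> Z \<times> Z"
proof -
  obtain e where e: "C = color_class_of E e" using C color_class_iff by blast
  have step: "g \<in> Z \<times> Z \<longleftrightarrow> h \<in> Z \<times> Z" if "(g, h) \<in> Gamma E" for g h
  proof -
    obtain a b a' b' where gh: "g = (a, b)" "h = (a', b')" by (meson surj_pair)
    show ?thesis
      using Gamma_partitive_closed[OF Z that[unfolded gh]] Gamma_partitive_closed[OF Z Gamma_sym[OF that[unfolded gh]]]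
      unfolding gh by blast
  qed
  have trancl_iff: "e \<in> Z \<times> Z \<longleftrightarrow> f \<in> Z \<times> Z" if "(e, f) \<in> (Gamma E)\<^sup>+" for f
    using that by (induction rule: trancl_induct) (use step in blast)+
  have "e \<in> Z \<times> Z" using assms(3-5) trancl_iff unfolding e color_class_of_def by blast
  then show ?thesis using trancl_iff unfolding e color_class_of_def by blast
qed

lemma color_class_reach_partitive:
  assumes C: "color_class E C" and a: "a \<in> V"
  shows "partitive V E (C\<^sup>* `` {a})"
proof (rule partitiveI)
  show "C\<^sup>* `` {a} \<subseteq> V"
  proof
    fix x assume "x \<in> C\<^sup>* `` {a}"
    then have "(a, x) \<in> C\<^sup>*" by simp
    then show "x \<in> V"
      using a color_class_subset_E[OF C] edge_in_V by (induction rule: rtrancl_induct) auto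
  qed
  have same: "(x, c) \<in> E \<longleftrightarrow> (a, c) \<in> E" if "(a, x) \<in> C\<^sup>*" "c \<notin> C\<^sup>* `` {a}" for x c
    using that(1)
  proof (induction rule: rtrancl_induct)
    case (step y z)
    then have "(y, c) \<notin> C" "(z, c) \<notin> C" using that(2) by (auto intro: rtrancl_into_rtrancl)
    then show ?case using color_class_edge_adj[OF C step(2)] step(3) by blast
  qed simp
  fix x y c assume "x \<in> C\<^sup>* `` {a}" "y \<in> C\<^sup>* `` {a}" "c \<notin> C\<^sup>* `` {a}" "(x, c) \<in> E"
  then show "(y, c) \<in> E" using same by blast
qed

lemma color_class_of_co_path:
  assumes "(s, t) \<in> (N \<inter> Z \<times> Z)\<^sup>*" "s \<in> Z" "\<And>z. z \<in> Z \<Longrightarrow> (u, z) \<in> E"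
  shows "(u, t) \<in> color_class_of E (u, s)"
proof -
  have "((u, s), (u, t)) \<in> (Gamma E)\<^sup>*"
    using assms(1)
  proof (induction rule: rtrancl_induct)
    case (step y z)
    then have "((u, y), (u, z)) \<in> Gamma E" using assms(3) by (auto simp: Gamma_iff complement_iff)
    with step(3) show ?case by (rule rtrancl_into_rtrancl)
  qed simp
  then show ?thesis
    using Gamma_rtrancl_into_trancl assms(2,3) unfolding color_class_of_def by blast
qed

lemma spanned_multiplex_of_subset_V: "spanned (multiplex_of V E S) \<subseteq> V"
  unfolding spanned_def multiplex_of_def using color_class_subset_E edge_in_V by fastforce

lemma color_class_subset_multiplex_of:
  "color_class E C \<Longrightarrow> (a, b) \<in> C \<Longrightarrow> a \<in> S \<Longrightarrow> b \<in> S \<Longrightarrow> C \<subseteq> multiplex_of V E S"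
  unfolding multiplex_of_def using color_class_subset_E by blast

lemma multiplex_of_subset_partitive:
  assumes "partitive V E Z" "S \<subseteq> Z"
  shows "multiplex_of V E S \<subseteq> Z \<times> Z"
  unfolding multiplex_of_def using color_class_subset_partitive[OF assms(1)] assms(2) by blast

lemma simplex_edge:
  assumes "(a, b) \<in> E"
  shows "simplex V E {a, b}"
  unfolding simplex_def
proof (intro conjI allI impI)
  show "{a, b} \<subseteq> V" using edge_in_V assms by blast
  have "a \<noteq> b" using assms edge_irrefl by blast
  then show "\<exists>x\<in>{a, b}. \<exists>y\<in>{a, b}. x \<noteq> y" by blast
  show "\<forall>x\<in>{a, b}. \<forall>y\<in>{a, b}. x \<noteq> y \<longrightarrow> (x, y) \<in> E" using assms edge_sym by blast
  fix C p q r t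
  assume C: "color_class E C" "(p, q) \<in> C \<inter> {a, b} \<times> {a, b}" "(r, t) \<in> C \<inter> {a, b} \<times> {a, b}"
  then have "(p, q) \<in> E" "(r, t) \<in> E" using color_class_subset_E by blast+
  with C show "{p, q} = {r, t}" using edge_irrefl by auto
qed

lemma spanned_multiplex_of_edge:
  assumes ab: "(a, b) \<in> E" and reach: "(color_class_of E (a, b))\<^sup>* `` {a} = V"
  shows "spanned (multiplex_of V E {a, b}) = V"
proof -
  let ?C = "color_class_of E (a, b)"
  have "?C \<subseteq> multiplex_of V E {a, b}"
    using color_class_subset_multiplex_of color_class_color_class_of color_class_of_refl ab by blast
  moreover have "V \<subseteq> Domain ?C \<union> Range ?C"
  proof
    fix x assume "x \<in> V"
    then have "(a, x) \<in> ?C\<^sup>*" using reach by blast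
    then show "x \<in> Domain ?C \<union> Range ?C"
      using color_class_of_refl[OF ab] by (cases rule: rtranclE) blast+
  qed
  ultimately have "V \<subseteq> spanned (multiplex_of V E {a, b})" unfolding spanned_def by blast
  with spanned_multiplex_of_subset_V show ?thesis by blast
qed

subsection \<open>Co-components of a partitive set\<close>

lemma induced_component_adj:
  assumes "P \<subseteq> V" "x \<in> P" "u \<in> induced_component N P x" "c \<in> P" "c \<notin> induced_component N P x"
  shows "(u, c) \<in> E"
proof (rule ccontr)
  assume "(u, c) \<notin> E"
  have "u \<in> P" using induced_component_subset[OF assms(2)] assms(3) by blast
  moreover have "u \<noteq> c" using assms(3,5) by blast
  ultimately have "(u, c) \<in> N" using \<open>(u, c) \<notin> E\<close> assms(1,4) by (auto simp: complement_iff)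
  then show False using induced_component_step[OF assms(3)] \<open>u \<in> P\<close> assms(4,5) by blast
qed

lemma partitive_union_induced_components:
  assumes P: "partitive V E P" and W: "W \<subseteq> P" "\<And>w. w \<in> W \<Longrightarrow> induced_component N P w \<subseteq> W"
  shows "partitive V E W"
proof (rule partitiveI)
  have PV: "P \<subseteq> V" using P partitive_subset by blast
  then show "W \<subseteq> V" using W by blast
  fix a b c assume H: "a \<in> W" "b \<in> W" "c \<in> V" "c \<notin> W" "(a, c) \<in> E"
  have "a \<in> P" "b \<in> P" using W(1) H(1,2) by blast+
  show "(b, c) \<in> E"
  proof (cases "c \<in> P")
    case True
    have "c \<notin> induced_component N P b" using W(2)[OF H(2)] H(4) by blast
    then show ?thesis by (rule induced_component_adj[OF PV \<open>b \<in> P\<close> induced_component_self True])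
  next
    case False
    then show ?thesis using partitive_adj[OF P \<open>a \<in> P\<close> \<open>b \<in> P\<close> H(3)] H(5) by blast
  qed
qed

lemma induced_components_Un_partitive:
  assumes "partitive V E P" "x \<in> P" "z \<in> P"
  shows "partitive V E (induced_component N P x \<union> induced_component N P z)"
proof (rule partitive_union_induced_components[OF assms(1)])
  show "induced_component N P x \<union> induced_component N P z \<subseteq> P"
    using induced_component_subset[OF assms(2)] induced_component_subset[OF assms(3)] by blast
  fix w assume "w \<in> induced_component N P x \<union> induced_component N P z"
  then show "induced_component N P w \<subseteq> induced_component N P x \<union> induced_component N P z"
    using induced_component_eq[OF sym_complement, of w P x] induced_component_eq[OF sym_complement, of w P z]
    by blast
qed

lemma induced_component_partitive:
  assumes "partitive V E P" "x \<in> P"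
  shows "partitive V E (induced_component N P x)"
  using induced_components_Un_partitive[OF assms(1,2,2)] by simp

lemma induced_component_split_nonadjacent:
  assumes "a \<in> induced_component N P x" "a \<notin> Q" "b \<in> induced_component N P x" "b \<in> Q"
  shows "\<exists>p q. p \<in> induced_component N P x \<and> p \<in> Q \<and>
    q \<in> induced_component N P x \<and> q \<notin> Q \<and> (p, q) \<notin> E"
proof -
  let ?K = "induced_component N P x"
  have K: "induced_component N P b = ?K" using induced_component_eq[OF sym_complement assms(3)] .
  then have "(b, a) \<in> (N \<inter> P \<times> P)\<^sup>*" using assms(1) unfolding induced_component_def by blast
  from rtrancl_exits_set[OF this assms(4,2)] obtain p q
    where pq: "p \<in> Q" "q \<notin> Q" "(p, q) \<in> N \<inter> P \<times> P" "(b, p) \<in> (N \<inter> P \<times> P)\<^sup>*" by blast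
  then have "p \<in> ?K" using K unfolding induced_component_def by blast
  moreover have "q \<in> ?K" using induced_component_step[OF \<open>p \<in> ?K\<close>] pq(3) by blast
  moreover have "(p, q) \<notin> E" using pq(3) by (simp add: complement_iff)
  ultimately show ?thesis using pq(1,2) by blast
qed

lemma induced_component_strong:
  assumes P: "partitive V E P" "x \<in> P" and ne: "induced_component N P x \<noteq> P"
  shows "strong_partitive V E (induced_component N P x)"
  unfolding strong_partitive_def
proof (intro conjI allI impI)
  let ?K = "induced_component N P x"
  have PV: "P \<subseteq> V" and KP: "?K \<subseteq> P"
    using partitive_subset[OF P(1)] induced_component_subset[OF P(2)] by auto
  show K: "partitive V E ?K" using induced_component_partitive[OF P] .
  fix Q assume Q: "partitive V E Q" "?K \<inter> Q \<noteq> {}"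
  show "?K \<subseteq> Q \<or> Q \<subseteq> ?K"
  proof (rule ccontr)
    assume "\<not> (?K \<subseteq> Q \<or> Q \<subseteq> ?K)"
    then obtain a b c where abc: "a \<in> ?K" "a \<notin> Q" "b \<in> ?K" "b \<in> Q" "c \<in> Q" "c \<notin> ?K"
      using Q(2) by blast
    obtain p q where pq: "p \<in> ?K" "p \<in> Q" "q \<in> ?K" "q \<notin> Q" "(p, q) \<notin> E"
      using induced_component_split_nonadjacent[OF abc(1-4)] by blast
    have nonadj: "(p, c') \<notin> E" if "c' \<in> Q" "c' \<notin> ?K" for c'
      using partitive_overlap_adj[OF K Q(1) pq(3,4,1,2) that] pq(5) edge_sym by blast
    have outside: "c' \<notin> P" if "c' \<in> Q" "c' \<notin> ?K" for c'
      using induced_component_adj[OF PV P(2) pq(1) _ that(2)] nonadj[OF that] by blast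
    obtain y where y: "y \<in> P" "y \<notin> ?K" using ne KP by blast
    have "p \<in> P" using KP pq(1) by blast
    have "y \<notin> Q" using outside y by blast
    have "(y, p) \<in> E \<longleftrightarrow> (p, c) \<in> E"
      using partitive_overlap_adj[OF P(1) Q(1) y(1) \<open>y \<notin> Q\<close> \<open>p \<in> P\<close> pq(2) abc(5)]
        outside[OF abc(5,6)] by blast
    moreover have "(p, y) \<in> E" using induced_component_adj[OF PV P(2) pq(1) y] .
    ultimately show False using nonadj[OF abc(5,6)] edge_sym[of y p] by blast
  qed
qed

subsection \<open>Maximal strong partitive sets\<close>

definition proper_adjacent_extension :: "'a set \<Rightarrow> 'a set \<Rightarrow> bool" where
  "proper_adjacent_extension X P \<longleftrightarrow>
     partitive V E P \<and> P \<noteq> V \<and> X \<subseteq> P \<and> (\<forall>y\<in>P - X. \<forall>x\<in>X. (x, y) \<in> E)"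

lemma adjacent_extension_overlap_adj:
  assumes X: "strong_partitive V E X" "x \<in> X"
    and R: "partitive V E R" "X \<subseteq> R" "\<forall>y\<in>R - X. \<forall>x\<in>X. (x, y) \<in> E"
    and Q: "partitive V E Q" "R \<inter> Q \<noteq> {}" "\<not> R \<subseteq> Q"
    and c: "c \<in> Q" "c \<notin> R"
  shows "(x, c) \<in> E"
proof (cases "X \<inter> Q = {}")
  case False
  then have XQ: "X \<subseteq> Q" using strong_partitiveD[OF X(1) Q(1)] R(2) c by blast
  obtain r where r: "r \<in> R" "r \<notin> Q" using Q(3) by blast
  then have "(x, r) \<in> E" using R(3) XQ X(2) by blast
  moreover have "x \<in> R" "x \<in> Q" using X(2) R(2) XQ by blast+
  ultimately show ?thesis
    using partitive_overlap_adj[OF R(1) Q(1) r \<open>x \<in> R\<close> \<open>x \<in> Q\<close> c] edge_sym[of x r] by blast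
next
  case True
  obtain q where q: "q \<in> R" "q \<in> Q" using Q(2) by blast
  then have "(x, q) \<in> E" using R(3) True X(2) by blast
  moreover have "x \<in> R" "x \<notin> Q" using X(2) R(2) True by blast+
  ultimately show ?thesis
    using partitive_overlap_adj[OF R(1) Q(1) \<open>x \<in> R\<close> \<open>x \<notin> Q\<close> q c] by blast
qed

lemma strong_partitive_subset_co_component:
  assumes X: "strong_partitive V E X" "x \<in> X" and P: "partitive V E P" "X \<subseteq> P"
    and KX: "induced_component N P x \<subseteq> X" and z: "z \<in> P" "z \<notin> X"
  shows "X \<subseteq> induced_component N P x"
proof -
  let ?K = "\<lambda>z. induced_component N P z"
  have xP: "x \<in> P" using X(2) P(2) by blast
  have xKz: "x \<notin> ?K z"
  proof
    assume "x \<in> ?K z"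
    then have "?K x = ?K z" by (rule induced_component_eq[OF sym_complement])
    then show False using induced_component_self[of z N P] KX z(2) by blast
  qed
  have Kz_strong: "strong_partitive V E (?K z)"
    using induced_component_strong[OF P(1) z(1)] xKz xP by blast
  have Kz_X: "?K z \<inter> X = {}"
  proof (rule ccontr)
    assume "?K z \<inter> X \<noteq> {}"
    then have "?K z \<subseteq> X \<or> X \<subseteq> ?K z"
      using strong_partitiveD[OF Kz_strong strong_partitive_partitive[OF X(1)]] by blast
    then show False using induced_component_self[of z N P] z(2) xKz X(2) by blast
  qed
  have "x \<in> X \<inter> (?K x \<union> ?K z)" using induced_component_self[of x N P] X(2) by blast
  then have "?K x \<union> ?K z \<subseteq> X \<or> X \<subseteq> ?K x \<union> ?K z"
    using strong_partitiveD[OF X(1) induced_components_Un_partitive[OF P(1) xP z(1)]] by blast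
  then show ?thesis using induced_component_self[of z N P] z(2) Kz_X by blast
qed

lemma maximal_strong_eq_co_component:
  assumes X: "maximal_strong_partitive V E X" "x \<in> X"
    and P: "partitive V E P" "P \<noteq> V" "X \<subseteq> P" "P \<noteq> X"
    and ne: "induced_component N P x \<noteq> P"
  shows "induced_component N P x = X"
proof -
  let ?K = "induced_component N P x"
  have xP: "x \<in> P" and PV: "P \<subseteq> V" using X(2) P(3) partitive_subset[OF P(1)] by auto
  have K_strong: "strong_partitive V E ?K" using induced_component_strong[OF P(1) xP ne] .
  have X_strong: "strong_partitive V E X" using maximal_strong_partitiveD(1)[OF X(1)] .
  have "x \<in> ?K \<inter> X" using induced_component_self[of x N P] X(2) by blast
  then have "?K \<subseteq> X \<or> X \<subseteq> ?K"
    using strong_partitiveD[OF K_strong strong_partitive_partitive[OF X_strong]] by blast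
  moreover have "?K \<noteq> V" using induced_component_subset[OF xP] P(2) PV by blast
  ultimately have KX: "?K \<subseteq> X"
    using maximal_strong_partitiveD(4)[OF X(1) K_strong] by blast
  obtain z where "z \<in> P" "z \<notin> X" using P(3,4) by blast
  then show ?thesis
    using strong_partitive_subset_co_component[OF X_strong X(2) P(1,3) KX] KX by blast
qed

text \<open>The three cells Y - Q, Y \<inter> Q and Q - Y are pairwise uniformly adjacent or uniformly
  non-adjacent, so either the co-components or the components of Y \<union> Q stay inside cells.\<close>

lemma non_strong_partitive_split:
  assumes Y: "partitive V E Y" "\<not> strong_partitive V E Y"
  obtains Q where "partitive V E Q" "Y \<inter> Q \<noteq> {}" "\<not> Q \<subseteq> Y" "\<not> Y \<subseteq> Q"
    "induced_component N (Y \<union> Q) x \<noteq> Y \<union> Q \<or> induced_component E (Y \<union> Q) x \<noteq> Y \<union> Q"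
proof -
  obtain Q where Q: "partitive V E Q" "Y \<inter> Q \<noteq> {}" "\<not> Y \<subseteq> Q" "\<not> Q \<subseteq> Y"
    using Y unfolding strong_partitive_def by blast
  then obtain a1 a2 a3 where a: "a1 \<in> Y" "a1 \<notin> Q" "a2 \<in> Y" "a2 \<in> Q" "a3 \<in> Q" "a3 \<notin> Y"
    by blast
  define cell where "cell p = (p \<in> Y, p \<in> Q)" for p
  have uniform: "(p, q) \<in> E \<longleftrightarrow> (a1, a2) \<in> E" if "p \<in> Y \<union> Q" "q \<in> Y \<union> Q" "cell p \<noteq> cell q" for p q
  proof -
    have "(p \<in> Y) \<noteq> (q \<in> Y) \<or> (p \<in> Q) \<noteq> (q \<in> Q)" using that(3) by (auto simp: cell_def)
    then show ?thesis using partitive_overlap_uniform_adj[OF Y(1) Q(1) a that(1,2)] by blast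
  qed
  obtain z where z: "z \<in> Y \<union> Q" "cell z \<noteq> cell x"
  proof (cases "x \<in> Q")
    case True
    then show thesis using that[of a1] a by (simp add: cell_def)
  next
    case False
    then show thesis using that[of a2] a by (simp add: cell_def)
  qed
  have "z \<notin> induced_component N (Y \<union> Q) x \<or> z \<notin> induced_component E (Y \<union> Q) x"
  proof (cases "(a1, a2) \<in> E")
    case True
    then have "cell p = cell q" if "p \<in> Y \<union> Q" "q \<in> Y \<union> Q" "(p, q) \<in> N" for p q
      using uniform[OF that(1,2)] that(3) by (auto simp: complement_iff)
    then show ?thesis using induced_component_invariant[of "Y \<union> Q" N cell] z by blast
  next
    case False
    then have "cell p = cell q" if "p \<in> Y \<union> Q" "q \<in> Y \<union> Q" "(p, q) \<in> E" for p q
      using uniform[OF that(1,2)] that(3) by blast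
    then show ?thesis using induced_component_invariant[of "Y \<union> Q" E cell] z by blast
  qed
  then show thesis using that Q z(1) by blast
qed

lemma proper_partitive_union_partitive: "partitive V E (proper_partitive_union V E v)"
  unfolding proper_partitive_union_def by (rule partitive_Union[of _ v]) blast

lemma proper_partitive_union_subset: "proper_partitive_union V E v \<subseteq> V"
  using proper_partitive_union_partitive partitive_subset by blast

lemma proper_partitive_union_upper:
  "partitive V E Y \<Longrightarrow> Y \<noteq> V \<Longrightarrow> v \<in> Y \<Longrightarrow> Y \<subseteq> proper_partitive_union V E v"
  unfolding proper_partitive_union_def by blast

lemma self_in_proper_partitive_union:
  "v \<in> V \<Longrightarrow> w \<in> V \<Longrightarrow> w \<noteq> v \<Longrightarrow> v \<in> proper_partitive_union V E v"
  using proper_partitive_union_upper[of "{v}" v] partitive_singleton by blast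

end

subsection \<open>Connected graphs with connected complement\<close>

locale connected_co_connected = undirected +
  assumes connected: "connected_graph V E" and co_connected: "connected_graph V N"
begin

lemma edge_path: "a \<in> V \<Longrightarrow> b \<in> V \<Longrightarrow> (a, b) \<in> (E \<inter> V \<times> V)\<^sup>*"
  using connected unfolding connected_graph_def by blast

lemma non_edge_path: "a \<in> V \<Longrightarrow> b \<in> V \<Longrightarrow> (a, b) \<in> (N \<inter> V \<times> V)\<^sup>*"
  using co_connected unfolding connected_graph_def by blast

lemma connected_co_connected_complement: "connected_co_connected V N"
  using undirected_graph_complement[OF undirected] co_connected connected
  by unfold_locales (simp_all add: graph_complement_graph_complement[OF undirected])

text \<open>If the union were V, the E-path and the N-path from a common vertex to a vertex of
  Y - Z would both have to leave Z, but all pairs in Z \<times> (Y - Z) have the same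
  adjacency status.\<close>

lemma proper_partitive_overlap_Un_ne_V:
  assumes Y: "partitive V E Y" "Y \<noteq> V" and Z: "partitive V E Z" "Z \<noteq> V" and "Y \<inter> Z \<noteq> {}"
  shows "Y \<union> Z \<noteq> V"
proof
  assume U: "Y \<union> Z = V"
  have YV: "Y \<subseteq> V" and ZV: "Z \<subseteq> V" using Y Z partitive_subset by auto
  obtain y0 where y0: "y0 \<in> Y" "y0 \<in> Z" using assms(5) by blast
  obtain r where r: "r \<in> Z" "r \<notin> Y" using U Y(2) YV by blast
  obtain d0 where d0: "d0 \<in> Y" "d0 \<notin> Z" using U Z(2) ZV by blast
  have uniform: "(z, d) \<in> E \<longleftrightarrow> (y0, r) \<in> E" if "z \<in> Z" "d \<in> Y" "d \<notin> Z" for z d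
  proof -
    have "d \<in> V" using that YV by blast
    then have "(z, d) \<in> E \<longleftrightarrow> (y0, d) \<in> E" using partitive_adj[OF Z(1) that(1) y0(2)] that(3) by blast
    moreover have "(d, y0) \<in> E \<longleftrightarrow> (y0, r) \<in> E"
      using partitive_overlap_adj[OF Y(1) Z(1) that(2,3) y0 r] by blast
    ultimately show ?thesis using edge_sym[of y0 d] by blast
  qed
  have "y0 \<in> V" "d0 \<in> V" using y0(1) d0(1) YV by blast+
  obtain p q where pq: "p \<in> Z" "q \<notin> Z" "(p, q) \<in> N \<inter> V \<times> V"
    using rtrancl_exits_set[OF non_edge_path[OF \<open>y0 \<in> V\<close> \<open>d0 \<in> V\<close>] y0(2) d0(2)] by blast
  obtain p' q' where pq': "p' \<in> Z" "q' \<notin> Z" "(p', q') \<in> E \<inter> V \<times> V"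
    using rtrancl_exits_set[OF edge_path[OF \<open>y0 \<in> V\<close> \<open>d0 \<in> V\<close>] y0(2) d0(2)] by blast
  have "q \<in> Y" "q' \<in> Y" using pq(2,3) pq'(2,3) U by blast+
  then have "(p, q) \<in> E \<longleftrightarrow> (p', q') \<in> E"
    using uniform[OF pq(1) _ pq(2)] uniform[OF pq'(1) _ pq'(2)] by blast
  then show False using pq(3) pq'(3) by (simp add: complement_iff)
qed

lemma adjacent_extension_ne_V:
  assumes "X \<noteq> V" "X \<subseteq> V" "x \<in> X" "\<forall>y\<in>P - X. \<forall>x\<in>X. (x, y) \<in> E"
  shows "P \<noteq> V"
proof
  assume "P = V"
  obtain w where w: "w \<in> V" "w \<notin> X" using assms(1,2) by blast
  have "(x, w) \<in> (N \<inter> V \<times> V)\<^sup>*" using non_edge_path w(1) assms(2,3) by blast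
  from rtrancl_exits_set[OF this assms(3) w(2)] obtain p q
    where pq: "p \<in> X" "q \<notin> X" "(p, q) \<in> N \<inter> V \<times> V" by blast
  then have "(p, q) \<in> E" using assms(4) \<open>P = V\<close> by blast
  then show False using pq(3) by (simp add: complement_iff)
qed

lemma proper_adjacent_extension_Un:
  assumes X: "strong_partitive V E X" and R: "proper_adjacent_extension X R"
    and Q: "partitive V E Q" "R \<inter> Q \<noteq> {}" "\<not> R \<subseteq> Q"
  shows "proper_adjacent_extension X (R \<union> Q)"
  unfolding proper_adjacent_extension_def
proof (intro conjI ballI)
  have R': "partitive V E R" "R \<noteq> V" "X \<subseteq> R" "\<forall>y\<in>R - X. \<forall>x\<in>X. (x, y) \<in> E"
    using R unfolding proper_adjacent_extension_def by blast+
  obtain q where "q \<in> R" "q \<in> Q" using Q(2) by blast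
  then show "partitive V E (R \<union> Q)" using partitive_Un[OF R'(1) Q(1)] by blast
  have "Q \<noteq> V" using Q(3) partitive_subset[OF R'(1)] by blast
  then show "R \<union> Q \<noteq> V" using proper_partitive_overlap_Un_ne_V[OF R'(1,2) Q(1) _ Q(2)] by blast
  show "X \<subseteq> R \<union> Q" using R'(3) by blast
  fix y x assume "y \<in> R \<union> Q - X" "x \<in> X"
  then show "(x, y) \<in> E"
    using R'(4) adjacent_extension_overlap_adj[OF X \<open>x \<in> X\<close> R'(1,3,4) Q, of y] by blast
qed

text \<open>The union of all proper adjacent extensions of X is again one, and it is strong.\<close>

lemma maximal_strong_no_adjacent_extension:
  assumes X: "maximal_strong_partitive V E X" "x \<in> X" and P: "proper_adjacent_extension X P"
  shows "P = X"
proof -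
  define R where "R = \<Union>{P. proper_adjacent_extension X P}"
  have Xs: "strong_partitive V E X" and XV: "X \<noteq> V" "X \<subseteq> V"
    using maximal_strong_partitiveD[OF X(1)] by blast+
  have R_part: "partitive V E R" unfolding R_def
    by (rule partitive_Union[of _ x]) (use X(2) in \<open>auto simp: proper_adjacent_extension_def\<close>)
  have XR: "X \<subseteq> R" and PR: "P \<subseteq> R" using P unfolding R_def proper_adjacent_extension_def by blast+
  have R_adj: "\<forall>y\<in>R - X. \<forall>x\<in>X. (x, y) \<in> E"
    unfolding R_def proper_adjacent_extension_def by blast
  have R_ext: "proper_adjacent_extension X R"
    unfolding proper_adjacent_extension_def
    using R_part XR R_adj adjacent_extension_ne_V[OF XV X(2) R_adj] by blast
  have R_strong: "strong_partitive V E R"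
    unfolding strong_partitive_def
  proof (intro conjI allI impI R_part)
    fix Q assume Q: "partitive V E Q" "R \<inter> Q \<noteq> {}"
    show "R \<subseteq> Q \<or> Q \<subseteq> R"
    proof (rule ccontr)
      assume nested: "\<not> (R \<subseteq> Q \<or> Q \<subseteq> R)"
      then have "proper_adjacent_extension X (R \<union> Q)"
        using proper_adjacent_extension_Un[OF Xs R_ext Q] by blast
      then have "Q \<subseteq> R" unfolding R_def by blast
      with nested show False by blast
    qed
  qed
  have "R \<noteq> V" using R_ext unfolding proper_adjacent_extension_def by blast
  then have "R = X" using maximal_strong_partitiveD(4)[OF X(1) R_strong _ XR] by blast
  then show ?thesis using PR P unfolding proper_adjacent_extension_def by blast
qed

lemma maximal_strong_co_connected_extension:
  assumes X: "maximal_strong_partitive V E X" "x \<in> X"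
    and P: "partitive V E P" "P \<noteq> V" "X \<subseteq> P" "P \<noteq> X"
  shows "induced_component N P x = P"
proof (rule ccontr)
  assume ne: "induced_component N P x \<noteq> P"
  have PV: "P \<subseteq> V" and xP: "x \<in> P" using partitive_subset[OF P(1)] X(2) P(3) by blast+
  have K: "induced_component N P x = X"
    using maximal_strong_eq_co_component[OF X P ne] .
  have "(x', y) \<in> E" if "y \<in> P - X" "x' \<in> X" for y x'
    using induced_component_adj[OF PV xP, of x' y] that K by blast
  then have "proper_adjacent_extension X P"
    unfolding proper_adjacent_extension_def using P(1-3) by blast
  then show False using maximal_strong_no_adjacent_extension[OF X] P(4) by blast
qed

lemma proper_partitive_subset_maximal_strong:
  assumes X: "maximal_strong_partitive V E X" "v \<in> X"
    and Y: "partitive V E Y" "Y \<noteq> V" "v \<in> Y"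
  shows "Y \<subseteq> X"
proof (rule ccontr)
  assume "\<not> Y \<subseteq> X"
  then have XY: "X \<subseteq> Y" "Y \<noteq> X"
    using strong_partitiveD[OF maximal_strong_partitiveD(1)[OF X(1)] Y(1)] X(2) Y(3) by blast+
  then have "\<not> strong_partitive V E Y" using maximal_strong_partitiveD(4)[OF X(1) _ Y(2)] by blast
  from non_strong_partitive_split[OF Y(1) this, where x = v] obtain Q where Q:
    "partitive V E Q" "Y \<inter> Q \<noteq> {}" "\<not> Q \<subseteq> Y" "\<not> Y \<subseteq> Q"
    and split: "induced_component N (Y \<union> Q) v \<noteq> Y \<union> Q \<or> induced_component E (Y \<union> Q) v \<noteq> Y \<union> Q" .
  have "Q \<noteq> V" using Q(4) partitive_subset[OF Y(1)] by blast
  obtain q where "q \<in> Y" "q \<in> Q" using Q(2) by blast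
  then have P: "partitive V E (Y \<union> Q)" "Y \<union> Q \<noteq> V" "X \<subseteq> Y \<union> Q" "Y \<union> Q \<noteq> X"
    using partitive_Un[OF Y(1) Q(1)] proper_partitive_overlap_Un_ne_V[OF Y(1,2) Q(1) \<open>Q \<noteq> V\<close> Q(2)]
      Q(3) XY by blast+
  have "induced_component N (Y \<union> Q) v = Y \<union> Q"
    using maximal_strong_co_connected_extension[OF X P] .
  moreover have "induced_component E (Y \<union> Q) v = Y \<union> Q"
    using connected_co_connected.maximal_strong_co_connected_extension[OF connected_co_connected_complement]
      X P by (simp add: graph_complement_graph_complement[OF undirected])
  ultimately show False using split by blast
qed

lemma maximal_strong_partition_proper_partitive_union_ne_V:
  assumes F: "partition_on V F" "\<forall>X\<in>F. maximal_strong_partitive V E X" and v: "v \<in> V"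
  shows "proper_partitive_union V E v \<noteq> V"
proof -
  obtain X where X: "X \<in> F" "v \<in> X" using F(1) v unfolding partition_on_def by blast
  then have "maximal_strong_partitive V E X" using F(2) by blast
  then have "proper_partitive_union V E v \<subseteq> X" "X \<noteq> V" "X \<subseteq> V"
    using proper_partitive_subset_maximal_strong[OF _ X(2)] maximal_strong_partitiveD(2,3)
    unfolding proper_partitive_union_def by blast+
  then show ?thesis by blast
qed

context
  assumes proper: "\<And>v. v \<in> V \<Longrightarrow> proper_partitive_union V E v \<noteq> V"
    and self: "\<And>v. v \<in> V \<Longrightarrow> v \<in> proper_partitive_union V E v"
begin

lemma proper_partitive_union_eq:
  assumes "v \<in> V" "w \<in> proper_partitive_union V E v"
  shows "proper_partitive_union V E w = proper_partitive_union V E v"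
proof
  have "w \<in> V" using assms(2) proper_partitive_union_subset by blast
  show vw: "proper_partitive_union V E v \<subseteq> proper_partitive_union V E w"
    using proper_partitive_union_upper[OF proper_partitive_union_partitive proper[OF assms(1)] assms(2)] .
  show "proper_partitive_union V E w \<subseteq> proper_partitive_union V E v"
    using proper_partitive_union_upper[OF proper_partitive_union_partitive proper[OF \<open>w \<in> V\<close>]]
      vw self[OF assms(1)] by blast
qed

lemma proper_partitive_union_strong:
  assumes v: "v \<in> V"
  shows "strong_partitive V E (proper_partitive_union V E v)"
  unfolding strong_partitive_def
proof (intro conjI allI impI)
  let ?U = "proper_partitive_union V E v"
  show U: "partitive V E ?U" by (rule proper_partitive_union_partitive)
  fix Q assume Q: "partitive V E Q" "?U \<inter> Q \<noteq> {}"
  show "?U \<subseteq> Q \<or> Q \<subseteq> ?U"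
  proof (cases "Q = V")
    case True
    then show ?thesis using proper_partitive_union_subset by blast
  next
    case False
    obtain q where "q \<in> ?U" "q \<in> Q" using Q(2) by blast
    then have "partitive V E (?U \<union> Q)" using partitive_Un[OF U Q(1)] by blast
    moreover have "?U \<union> Q \<noteq> V"
      using proper_partitive_overlap_Un_ne_V[OF U proper[OF v] Q(1) False Q(2)] .
    moreover have "v \<in> ?U \<union> Q" using self[OF v] by blast
    ultimately have "?U \<union> Q \<subseteq> ?U" using proper_partitive_union_upper by blast
    then show ?thesis by blast
  qed
qed

lemma proper_partitive_union_maximal:
  assumes v: "v \<in> V"
  shows "maximal_strong_partitive V E (proper_partitive_union V E v)"
  unfolding maximal_strong_partitive_def
proof (intro conjI allI impI proper_partitive_union_strong proper v)
  fix Y assume Y: "strong_partitive V E Y" "Y \<noteq> V" "proper_partitive_union V E v \<subseteq> Y"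
  then have "Y \<subseteq> proper_partitive_union V E v"
    using proper_partitive_union_upper[OF strong_partitive_partitive[OF Y(1)] Y(2)] self[OF v] by blast
  with Y(3) show "Y = proper_partitive_union V E v" by blast
qed

lemma proper_partitive_unions_partition:
  "\<exists>F. partition_on V F \<and> F \<noteq> {V} \<and> (\<forall>X\<in>F. maximal_strong_partitive V E X)"
proof (intro exI conjI ballI)
  show "partition_on V (proper_partitive_union V E ` V)"
    by (rule partition_on_image) (use self proper_partitive_union_subset proper_partitive_union_eq in blast)+
  obtain v where "v \<in> V" using connected unfolding connected_graph_def by blast
  then show "proper_partitive_union V E ` V \<noteq> {V}" using proper by blast
  fix X assume "X \<in> proper_partitive_union V E ` V"
  then show "maximal_strong_partitive V E X" using proper_partitive_union_maximal by blast
qed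

lemma proper_partitive_unions_multiplex: "\<exists>M. multiplex V E M \<and> spanned M = V"
proof -
  obtain v where v: "v \<in> V" using connected unfolding connected_graph_def by blast
  obtain w where w: "w \<in> V" "w \<notin> proper_partitive_union V E v"
    using proper[OF v] proper_partitive_union_subset by blast
  from rtrancl_exits_set[OF edge_path[OF v w(1)] self[OF v] w(2)] obtain a b
    where ab: "a \<in> proper_partitive_union V E v" "b \<notin> proper_partitive_union V E v" "(a, b) \<in> E"
    by blast
  have a: "a \<in> V" using ab(3) edge_in_V by blast
  have Ua: "proper_partitive_union V E a = proper_partitive_union V E v"
    using proper_partitive_union_eq[OF v ab(1)] .
  let ?C = "color_class_of E (a, b)"
  have reach: "partitive V E (?C\<^sup>* `` {a})"
    using color_class_reach_partitive[OF color_class_color_class_of[OF ab(3)] a] .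
  have "(a, b) \<in> ?C" using color_class_of_refl[OF ab(3)] .
  then have "b \<in> ?C\<^sup>* `` {a}" by blast
  then have "?C\<^sup>* `` {a} = V"
    using proper_partitive_union_upper[OF reach, of a] ab(2) Ua by blast
  then have "spanned (multiplex_of V E {a, b}) = V" using spanned_multiplex_of_edge[OF ab(3)] by blast
  then show ?thesis using simplex_edge[OF ab(3)] unfolding multiplex_def by blast
qed

end

lemma common_proper_partitive:
  assumes "proper_partitive_union V E v = V" "s \<in> V" "w \<in> V"
  shows "\<exists>Z. partitive V E Z \<and> Z \<noteq> V \<and> s \<in> Z \<and> w \<in> Z"
proof -
  obtain Y1 Y2 where Y: "partitive V E Y1" "Y1 \<noteq> V" "v \<in> Y1" "w \<in> Y1"
    "partitive V E Y2" "Y2 \<noteq> V" "v \<in> Y2" "s \<in> Y2"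
    using assms unfolding proper_partitive_union_def by blast
  then have "Y1 \<union> Y2 \<noteq> V" using proper_partitive_overlap_Un_ne_V[OF Y(1,2,5,6)] by blast
  with Y show ?thesis using partitive_Un[OF Y(1,5,3,7)] by blast
qed

lemma co_path_in_proper_partitive:
  assumes U: "proper_partitive_union V E v = V" and "s \<in> V" "t \<in> V"
  shows "\<exists>Z. partitive V E Z \<and> Z \<noteq> V \<and> s \<in> Z \<and> (s, t) \<in> (N \<inter> Z \<times> Z)\<^sup>*"
  using non_edge_path[OF assms(2,3)]
proof (induction rule: rtrancl_induct)
  case base
  then show ?case using common_proper_partitive[OF U] assms(2) by blast
next
  case (step y z)
  then obtain Z where Z: "partitive V E Z" "Z \<noteq> V" "s \<in> Z" "(s, y) \<in> (N \<inter> Z \<times> Z)\<^sup>*"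
    by blast
  obtain Z' where Z': "partitive V E Z'" "Z' \<noteq> V" "s \<in> Z'" "z \<in> Z'"
    using common_proper_partitive[OF U assms(2)] step(2) by blast
  have y: "y \<in> Z" using Z(3,4) by (auto elim: rtranclE)
  have "(N \<inter> Z \<times> Z)\<^sup>* \<subseteq> (N \<inter> (Z \<union> Z') \<times> (Z \<union> Z'))\<^sup>*" by (rule rtrancl_mono) blast
  then have "(s, y) \<in> (N \<inter> (Z \<union> Z') \<times> (Z \<union> Z'))\<^sup>*" using Z(4) by blast
  moreover have "(y, z) \<in> N \<inter> (Z \<union> Z') \<times> (Z \<union> Z')" using step(2) y Z'(4) by blast
  ultimately have "(s, z) \<in> (N \<inter> (Z \<union> Z') \<times> (Z \<union> Z'))\<^sup>*" by (rule rtrancl_into_rtrancl)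
  moreover have "Z \<union> Z' \<noteq> V" using proper_partitive_overlap_Un_ne_V[OF Z(1,2) Z'(1,2)] Z(3) Z'(3) by blast
  ultimately show ?case using partitive_Un[OF Z(1) Z'(1) Z(3) Z'(3)] Z(3) by blast
qed

text \<open>Take two vertices s, t of a simplex S and a proper partitive Z in which they are joined
  by non-edges. If S \<subseteq> Z, the whole multiplex stays inside Z; otherwise a vertex u of S
  outside Z sees the edges us and ut in one color class.\<close>

lemma proper_partitive_union_eq_V_no_spanning_multiplex:
  assumes "proper_partitive_union V E v = V"
  shows "\<not> (\<exists>M. multiplex V E M \<and> spanned M = V)"
proof
  assume "\<exists>M. multiplex V E M \<and> spanned M = V"
  then obtain S where S: "simplex V E S" and span: "spanned (multiplex_of V E S) = V"
    unfolding multiplex_def by blast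
  obtain s t where st: "s \<in> S" "t \<in> S" "s \<noteq> t" and SV: "S \<subseteq> V"
    using S unfolding simplex_def by blast
  obtain Z where Z: "partitive V E Z" "Z \<noteq> V" "s \<in> Z" "(s, t) \<in> (N \<inter> Z \<times> Z)\<^sup>*"
    using co_path_in_proper_partitive[OF assms] st SV by blast
  show False
  proof (cases "S \<subseteq> Z")
    case True
    then have "spanned (multiplex_of V E S) \<subseteq> Z"
      using multiplex_of_subset_partitive[OF Z(1)] unfolding spanned_def by blast
    then show False using span Z(2) partitive_subset[OF Z(1)] by blast
  next
    case False
    then obtain u where u: "u \<in> S" "u \<notin> Z" by blast
    have "u \<noteq> s" "u \<noteq> t" using u Z(3,4) by (auto elim: rtranclE)
    then have "(u, s) \<in> E" using S u(1) st(1) unfolding simplex_def by blast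
    have "u \<in> V" using u(1) SV by blast
    have "(u, z) \<in> E" if "z \<in> Z" for z
      using partitive_adj[OF Z(1) that Z(3) \<open>u \<in> V\<close> u(2)] \<open>(u, s) \<in> E\<close> edge_sym[of u s] edge_sym[of u z]
      by blast
    then have "(u, t) \<in> color_class_of E (u, s)" using color_class_of_co_path[OF Z(4,3)] by blast
    then have "{u, s} = {u, t}"
      using simplex_color_class_unique[OF S color_class_color_class_of[OF \<open>(u, s) \<in> E\<close>]
          color_class_of_refl[OF \<open>(u, s) \<in> E\<close>]] u(1) st(1,2) by blast
    then show False using \<open>u \<noteq> s\<close> st(3) by (metis doubleton_eq_iff)
  qed
qed

lemma maximal_strong_partition_iff_spanning_multiplex:
  assumes "\<exists>a\<in>V. \<exists>b\<in>V. a \<noteq> b"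
  shows "(\<exists>F. partition_on V F \<and> F \<noteq> {V} \<and> (\<forall>X\<in>F. maximal_strong_partitive V E X))
    \<longleftrightarrow> (\<exists>M. multiplex V E M \<and> spanned M = V)"
proof (cases "\<exists>v\<in>V. proper_partitive_union V E v = V")
  case True
  then show ?thesis
    using maximal_strong_partition_proper_partitive_union_ne_V
      proper_partitive_union_eq_V_no_spanning_multiplex by blast
next
  case False
  then have proper: "\<And>v. v \<in> V \<Longrightarrow> proper_partitive_union V E v \<noteq> V" by blast
  have self: "\<And>v. v \<in> V \<Longrightarrow> v \<in> proper_partitive_union V E v"
    using self_in_proper_partitive_union assms by metis
  show ?thesis
    using proper_partitive_unions_partition[OF proper self]
      proper_partitive_unions_multiplex[OF proper self] by blast
qed

end

subsection \<open>Graphs with disconnected complement\<close>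

locale co_disconnected = undirected +
  assumes nonempty: "V \<noteq> {}" and co_disconnected: "\<not> connected_graph V N"
begin

abbreviation co_component :: "'a \<Rightarrow> 'a set" where
  "co_component v \<equiv> induced_component N V v"

lemma co_component_eq: "w \<in> co_component v \<Longrightarrow> co_component w = co_component v"
  using induced_component_eq[OF sym_complement] .

lemma co_component_subset: "v \<in> V \<Longrightarrow> co_component v \<subseteq> V"
  using induced_component_subset .

lemma co_component_ne_V:
  assumes v: "v \<in> V"
  shows "co_component v \<noteq> V"
proof
  assume K: "co_component v = V"
  have "(a, b) \<in> (N \<inter> V \<times> V)\<^sup>*" if "a \<in> V" "b \<in> V" for a b
  proof -
    have "co_component a = V" using co_component_eq[of a v] K that(1) by simp
    then show ?thesis using that(2) unfolding induced_component_def by blast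
  qed
  then show False using co_disconnected nonempty unfolding connected_graph_def by blast
qed

lemma co_component_adj:
  "v \<in> V \<Longrightarrow> u \<in> co_component v \<Longrightarrow> c \<in> V \<Longrightarrow> c \<notin> co_component v \<Longrightarrow> (u, c) \<in> E"
  using induced_component_adj[of V v u c] by blast

lemma co_component_strong: "v \<in> V \<Longrightarrow> strong_partitive V E (co_component v)"
  using induced_component_strong[OF partitive_V _ co_component_ne_V] .

lemma co_component_disjoint_strong:
  assumes Y: "strong_partitive V E Y" "co_component v \<subseteq> Y" and u: "u \<in> V" "u \<notin> Y"
  shows "co_component u \<inter> Y = {}"
proof (rule ccontr)
  assume "co_component u \<inter> Y \<noteq> {}"
  then have "Y \<subseteq> co_component u"
    using strong_partitiveD[OF co_component_strong[OF u(1)] strong_partitive_partitive[OF Y(1)]]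
      induced_component_self[of u N V] u(2) by blast
  then have "v \<in> co_component u" using Y(2) induced_component_self[of v N V] by blast
  then have "co_component v = co_component u" by (rule co_component_eq)
  then show False using Y(2) u(2) induced_component_self[of u N V] by blast
qed

text \<open>A strong Y strictly above co_component v misses some co_component u; the union of the
  two co-components is partitive and overlaps Y without being nested with it.\<close>

lemma co_component_maximal:
  assumes v: "v \<in> V"
  shows "maximal_strong_partitive V E (co_component v)"
  unfolding maximal_strong_partitive_def
proof (intro conjI allI impI co_component_strong co_component_ne_V v)
  fix Y assume Y: "strong_partitive V E Y" "Y \<noteq> V" "co_component v \<subseteq> Y"
  show "Y = co_component v"
  proof (rule ccontr)
    assume "Y \<noteq> co_component v"
    then obtain y where y: "y \<in> Y" "y \<notin> co_component v" using Y(3) by blast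
    obtain u where u: "u \<in> V" "u \<notin> Y"
      using Y(2) partitive_subset[OF strong_partitive_partitive[OF Y(1)]] by blast
    have "v \<in> Y \<inter> (co_component v \<union> co_component u)"
      using Y(3) induced_component_self[of v N V] by blast
    then have "Y \<subseteq> co_component v \<union> co_component u \<or> co_component v \<union> co_component u \<subseteq> Y"
      using strong_partitiveD[OF Y(1) induced_components_Un_partitive[OF partitive_V v u(1)]] by blast
    then show False
      using y co_component_disjoint_strong[OF Y(1,3) u] u(2) induced_component_self[of u N V] by blast
  qed
qed

lemma co_components_partition:
  "\<exists>F. partition_on V F \<and> F \<noteq> {V} \<and> (\<forall>X\<in>F. maximal_strong_partitive V E X)"
proof (intro exI conjI ballI)
  show "partition_on V (co_component ` V)"
  proof (rule partition_on_image)
    show "v \<in> co_component v" for v by (rule induced_component_self)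
    show "v \<in> V \<Longrightarrow> co_component v \<subseteq> V" for v by (rule co_component_subset)
    show "w \<in> co_component v \<Longrightarrow> co_component w = co_component v" for v w by (rule co_component_eq)
  qed
  obtain v where "v \<in> V" using nonempty by blast
  then show "co_component ` V \<noteq> {V}" using co_component_ne_V by blast
  fix X assume "X \<in> co_component ` V"
  then show "maximal_strong_partitive V E X" using co_component_maximal by blast
qed

lemma nonadjacent_co_component:
  assumes "p \<in> V" "q \<in> V" "(p, q) \<notin> E"
  shows "co_component q = co_component p"
proof (cases "p = q")
  case False
  with assms have "(p, q) \<in> N" by (simp add: complement_iff)
  from induced_component_step[OF induced_component_self this assms(1,2)]
  have "q \<in> co_component p" .
  then show ?thesis by (rule co_component_eq)
qed simp

lemma Gamma_trancl_co_component:
  assumes "(e, f) \<in> (Gamma E)\<^sup>+"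
  shows "co_component (fst f) = co_component (fst e) \<and> co_component (snd f) = co_component (snd e)"
proof -
  have Gamma_step: "co_component (fst h) = co_component (fst g) \<and> co_component (snd h) = co_component (snd g)"
    if "(g, h) \<in> Gamma E" for g h
  proof -
    obtain p q p' q' where gh: "g = (p, q)" "h = (p', q')" by (meson surj_pair)
    with that have "(p, q) \<in> E" "(p', q') \<in> E" by (auto simp: Gamma_iff)
    then have V': "p \<in> V" "q \<in> V" "p' \<in> V" "q' \<in> V" using edge_in_V by blast+
    from that gh consider "p = p'" "(q, q') \<notin> E" | "q = q'" "(p, p') \<notin> E"
      by (auto simp: Gamma_iff)
    then show ?thesis
    proof cases
      case 1
      then show ?thesis using gh nonadjacent_co_component[OF V'(2,4)] by simp
    next
      case 2
      then show ?thesis using gh nonadjacent_co_component[OF V'(1,3)] by simp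
    qed
  qed
  from assms show ?thesis
  proof (induction rule: trancl_induct)
    case (base y)
    then show ?case by (rule Gamma_step)
  next
    case (step y z)
    then show ?case using Gamma_step[OF step(2)] step(3) by simp
  qed
qed
definition co_component_rep :: "'a \<Rightarrow> 'a" where
  "co_component_rep w = (SOME x. x \<in> co_component w)"

lemma co_component_rep_in: "co_component_rep w \<in> co_component w"
  unfolding co_component_rep_def using induced_component_self by (rule someI)

lemma co_component_co_component_rep: "co_component (co_component_rep w) = co_component w"
  using co_component_eq[OF co_component_rep_in] .

lemma co_component_rep_inj:
  assumes "a \<in> co_component_rep ` V" "b \<in> co_component_rep ` V" "co_component a = co_component b"
  shows "a = b"
proof -
  obtain x y where xy: "a = co_component_rep x" "b = co_component_rep y" using assms(1,2) by blast
  then have "co_component x = co_component y" using assms(3) co_component_co_component_rep by simp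
  then show ?thesis unfolding xy co_component_rep_def by simp
qed

lemma co_component_reps_subset: "co_component_rep ` V \<subseteq> V"
  using co_component_rep_in co_component_subset by blast

lemma co_component_reps_adj:
  assumes a: "a \<in> co_component_rep ` V" and b: "b \<in> co_component_rep ` V" and "a \<noteq> b"
  shows "(a, b) \<in> E"
proof -
  have "b \<notin> co_component a"
    using co_component_eq[of b a] co_component_rep_inj[OF a b] \<open>a \<noteq> b\<close> by auto
  moreover have "a \<in> V" "b \<in> V" using a b co_component_reps_subset by blast+
  ultimately show ?thesis using co_component_adj[OF _ induced_component_self] by blast
qed

lemma color_class_co_components:
  assumes C: "color_class E C" and "(a, b) \<in> C" "(c, d) \<in> C"
  shows "(co_component a = co_component c \<and> co_component b = co_component d) \<or>
    (co_component a = co_component d \<and> co_component b = co_component c)"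
proof -
  obtain e where e: "C = color_class_of E e" using C color_class_iff by blast
  have ends: "(co_component x = co_component (fst e) \<and> co_component y = co_component (snd e)) \<or>
      (co_component y = co_component (fst e) \<and> co_component x = co_component (snd e))"
    if "(x, y) \<in> C" for x y
  proof -
    from that have "(e, (x, y)) \<in> (Gamma E)\<^sup>+ \<or> (e, (y, x)) \<in> (Gamma E)\<^sup>+"
      unfolding e color_class_of_def by blast
    then show ?thesis
      using Gamma_trancl_co_component[of e "(x, y)"] Gamma_trancl_co_component[of e "(y, x)"] by auto
  qed
  from ends[OF assms(2)] ends[OF assms(3)] show ?thesis by (elim disjE conjE; simp)
qed

lemma co_component_reps_simplex: "simplex V E (co_component_rep ` V)"
  unfolding simplex_def
proof (intro conjI allI impI ballI co_component_reps_subset)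
  obtain v where v: "v \<in> V" using nonempty by blast
  then obtain u where u: "u \<in> V" "u \<notin> co_component v"
    using co_component_ne_V co_component_subset by blast
  then have "co_component v \<noteq> co_component u" using induced_component_self[of u N V] by blast
  then have "co_component_rep v \<noteq> co_component_rep u"
    using co_component_co_component_rep by metis
  moreover have "co_component_rep v \<in> co_component_rep ` V" "co_component_rep u \<in> co_component_rep ` V"
    using v u(1) by blast+
  ultimately show "\<exists>a\<in>co_component_rep ` V. \<exists>b\<in>co_component_rep ` V. a \<noteq> b" by blast
next
  fix a b
  assume "a \<in> co_component_rep ` V" "b \<in> co_component_rep ` V" "a \<noteq> b"
  then show "(a, b) \<in> E" by (rule co_component_reps_adj)
next
  fix C a b c d
  assume C: "color_class E C" "(a, b) \<in> C \<inter> co_component_rep ` V \<times> co_component_rep ` V"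
    "(c, d) \<in> C \<inter> co_component_rep ` V \<times> co_component_rep ` V"
  then have S: "a \<in> co_component_rep ` V" "b \<in> co_component_rep ` V"
    "c \<in> co_component_rep ` V" "d \<in> co_component_rep ` V" by blast+
  have "(co_component a = co_component c \<and> co_component b = co_component d) \<or>
      (co_component a = co_component d \<and> co_component b = co_component c)"
    using color_class_co_components[OF C(1)] C(2,3) by blast
  then have "(a = c \<and> b = d) \<or> (a = d \<and> b = c)"
    using co_component_rep_inj[OF S(1,3)] co_component_rep_inj[OF S(2,4)]
      co_component_rep_inj[OF S(1,4)] co_component_rep_inj[OF S(2,3)] by blast
  then show "{a, b} = {c, d}" by blast
qed

lemma co_component_reps_spanned: "spanned (multiplex_of V E (co_component_rep ` V)) = V"
proof
  let ?S = "co_component_rep ` V"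
  show "spanned (multiplex_of V E ?S) \<subseteq> V" by (rule spanned_multiplex_of_subset_V)
  show "V \<subseteq> spanned (multiplex_of V E ?S)"
  proof
    fix v assume v: "v \<in> V"
    obtain u where u: "u \<in> V" "u \<notin> co_component v"
      using v co_component_ne_V co_component_subset by blast
    define a where "a = co_component_rep v"
    define b where "b = co_component_rep u"
    have a: "a \<in> ?S" "co_component a = co_component v" "a \<in> V"
      using v co_component_co_component_rep co_component_reps_subset unfolding a_def by auto
    have b: "b \<in> ?S" "co_component b = co_component u" "b \<in> V"
      using u co_component_co_component_rep co_component_reps_subset unfolding b_def by auto
    have "b \<notin> co_component a"
      using co_component_eq[of b a] a(2) b(2) u(2) induced_component_self[of u N V] by auto
    then have "(b, z) \<in> E" if "z \<in> co_component a" for z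
      using co_component_adj[OF a(3) that b(3)] edge_sym[of b z] by blast
    moreover have "(a, v) \<in> (N \<inter> co_component a \<times> co_component a)\<^sup>*"
      using induced_component_rtrancl[of v N V a] a(2) induced_component_self[of v N V] by simp
    ultimately have "(b, v) \<in> color_class_of E (b, a)"
      using color_class_of_co_path induced_component_self[of a N V] by blast
    moreover have "(b, a) \<in> E"
      using co_component_reps_adj[OF b(1) a(1)] \<open>b \<notin> co_component a\<close> induced_component_self[of a N V]
      by blast
    ultimately have "(b, v) \<in> multiplex_of V E ?S"
      using color_class_subset_multiplex_of[OF color_class_color_class_of color_class_of_refl b(1) a(1)]
      by blast
    then show "v \<in> spanned (multiplex_of V E ?S)" unfolding spanned_def by blast
  qed
qed

lemma co_components_multiplex: "\<exists>M. multiplex V E M \<and> spanned M = V"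
  using co_component_reps_simplex co_component_reps_spanned unfolding multiplex_def by blast

end

theorem corollary4p11:
  fixes V :: "'a set" and E :: "('a \<times> 'a) set"
  assumes "undirected_graph V E" and "connected_graph V E"
  shows "(\<exists>F. partition_on V F \<and> F \<noteq> {V} \<and> (\<forall>X\<in>F. maximal_strong_partitive V E X))
     \<longleftrightarrow> (\<exists>M. multiplex V E M \<and> spanned M = V)"
proof -
  interpret undirected V E using assms(1) by unfold_locales
  have "V \<noteq> {}" using assms(2) unfolding connected_graph_def by blast
  show ?thesis
  proof (cases "\<exists>a\<in>V. \<exists>b\<in>V. a \<noteq> b")
    case False
    with partition_on_ne_single_block[OF _ _ \<open>V \<noteq> {}\<close>] multiplex_two_vertices show ?thesis by blast
  next
    case two: True
    show ?thesis
    proof (cases "connected_graph V N")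
      case True
      interpret connected_co_connected V E using assms(2) True by unfold_locales
      show ?thesis using maximal_strong_partition_iff_spanning_multiplex[OF two] .
    next
      case False
      interpret co_disconnected V E using \<open>V \<noteq> {}\<close> False by unfold_locales
      show ?thesis using co_components_partition co_components_multiplex by blast
    qed
  qed
qed

end
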